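(* In the streaming PCA setting, let $\{\hat{\bm v}_t\}$ be produced by either the Oja update or the Krasulina–Oja update, and let $L_t:=\sin^2(\hat{\bm v}_t,\bm v_1)$. Then for all $t\ge1$, almost surely, $$L_t\le\begin{cases}(1-2\rho\eta_t)L_{t-1}+2\rho\eta_tL_{t-1}^2+Q_t+4B^4\eta_t^2 & \text{(Krasulina–Oja)},\\ (1-2\rho\eta_t)L_{t-1}+2\rho\eta_tL_{t-1}^2+Q_t+(5B^4+2\eta_tB^6)\eta_t^2 & \text{(Oja)},\end{cases}$$ where $Q_t$ is an $\mathcal F_t$-measurable random variable satisfying $\mathbb E(Q_t\mid\mathcal F_{t-1})=0$ and $|Q_t|\le8B^2\eta_t\sqrt{L_{t-1}}$.
   Context: Streaming PCA setting: $\bm X_1,\bm X_2,\dots\in\mathbb R^p$ are i.i.d. centered random vectors with covariance matrix $\bm\Sigma$, and $\|\bm X_i\|\le B$ almost surely. The eigenvalues of $\bm\Sigma$ in decreasing order are $\lambda_1>\lambda_2\ge\dots\ge\lambda_p$, $\bm v_1$ is a unit eigenvector for $\lambda_1$, and $\rho:=\lambda_1-\lambda_2$ is the eigengap. $\hat{\bm v}_0$ is a random unit vector independent of $(\bm X_t)$ (e.g. uniform on the sphere). $\{\eta_t\}_{t\ge1}$ are deterministic positive step sizes. Oja update: $\hat{\bm v}_t=(\bm I_p+\eta_t\bm X_t\bm X_t^\top)\hat{\bm v}_{t-1}$, followed by normalization $\hat{\bm v}_t\leftarrow\hat{\bm v}_t/\|\hat{\bm v}_t\|$. Krasulina–Oja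 update: with $y_t:=\bm X_t^\top\hat{\bm v}_{t-1}$, $\hat{\bm v}_t=\hat{\bm v}_{t-1}+\eta_t\,y_t\big[\bm X_t-\frac{y_t}{\|\hat{\bm v}_{t-1}\|^2}\hat{\bm v}_{t-1}\big]$. For non-zero $\bm x,\bm y$, $\sin^2(\bm x,\bm y):=1-\frac{\langle\bm x,\bm y\rangle^2}{\|\bm x\|^2\|\bm y\|^2}$. $\mathcal F_t:=\sigma(\hat{\bm v}_0,\bm X_1,\dots,\bm X_t)$. *)

theory Defs
  imports "HOL-Probability.Probability"
begin

definition sin2 :: "real^'p \<Rightarrow> real^'p \<Rightarrow> real" where
  "sin2 x y = 1 - (x \<bullet> y)\<^sup>2 / ((norm x)\<^sup>2 * (norm y)\<^sup>2)"

definition oja_step :: "real \<Rightarrow> real^'p \<Rightarrow> real^'p \<Rightarrow> real^'p" where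
  "oja_step eta x v = (let w = v + (eta * (x \<bullet> v)) *\<^sub>R x in w /\<^sub>R norm w)"

definition kras_step :: "real \<Rightarrow> real^'p \<Rightarrow> real^'p \<Rightarrow> real^'p" where
  "kras_step eta x v = (let y = x \<bullet> v in v + (eta * y) *\<^sub>R (x - (y / (norm v)\<^sup>2) *\<^sub>R v))"

text \<open>Iterates: index 0 is the initial vector, the t-th iterate uses eta t and X t (t >= 1).\<close>
primrec oja_iter :: "(nat \<Rightarrow> real) \<Rightarrow> (nat \<Rightarrow> 'a \<Rightarrow> real^'p) \<Rightarrow> ('a \<Rightarrow> real^'p)
    \<Rightarrow> nat \<Rightarrow> 'a \<Rightarrow> real^'p" where
  "oja_iter eta X v0 0 \<omega> = v0 \<omega>"
| "oja_iter eta X v0 (Suc t) \<omega> = oja_step (eta (Suc t)) (X (Suc t) \<omega>) (oja_iter eta X v0 t \<omega>)"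

primrec kras_iter :: "(nat \<Rightarrow> real) \<Rightarrow> (nat \<Rightarrow> 'a \<Rightarrow> real^'p) \<Rightarrow> ('a \<Rightarrow> real^'p)
    \<Rightarrow> nat \<Rightarrow> 'a \<Rightarrow> real^'p" where
  "kras_iter eta X v0 0 \<omega> = v0 \<omega>"
| "kras_iter eta X v0 (Suc t) \<omega> = kras_step (eta (Suc t)) (X (Suc t) \<omega>) (kras_iter eta X v0 t \<omega>)"

text \<open>Natural filtration F_t = sigma(v0, X_1, ..., X_t), where Z 0 = v0 and Z i = X i for i >= 1.\<close>
definition nat_filtration :: "'a measure \<Rightarrow> (nat \<Rightarrow> 'a \<Rightarrow> real^'p) \<Rightarrow> nat \<Rightarrow> 'a measure" where
  "nat_filtration M Z t =
     sigma (space M) (\<Union>i\<in>{..t}. {Z i -` A \<inter> space M | A. A \<in> sets (borel :: (real^'p) measure)})"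

text \<open>lam 0 >= lam 1 >= ... >= lam (p-1) are the eigenvalues of S in decreasing order
  (with multiplicity): there is an orthonormal eigenbasis u 0, ..., u (p-1) with
  S u i = lam i u i. (Indices are 0-based: lam 0 = lambda_1, lam 1 = lambda_2.)\<close>
definition ordered_eigenvalues :: "real^'p^'p \<Rightarrow> (nat \<Rightarrow> real) \<Rightarrow> bool" where
  "ordered_eigenvalues S lam \<longleftrightarrow>
     (\<exists>u :: nat \<Rightarrow> real^'p.
        (\<forall>i<CARD('p). \<forall>j<CARD('p). u i \<bullet> u j = (if i = j then 1 else 0)) \<and>
        (\<forall>i<CARD('p). S *v u i = lam i *\<^sub>R u i) \<and>
        (\<forall>i j. i \<le> j \<longrightarrow> j < CARD('p) \<longrightarrow> lam j \<le> lam i))"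

end

theory Submission
  imports Defs
begin

(* Up to components along u = v / norm v, which do not affect sin2 to first order, both updates
   move u by eta (x . u) x. Hence one step changes L = sin2 u v1 by
   D = eta (x . u) (x . grad L(u)), where grad L(u) = -2 (u . v1) (v1 - (u . v1) u), up to a
   remainder of order eta^2 B^4 (for Oja, plus eta^3 B^6 from the normalisation).
   Since X_t is independent of F_(t-1), the conditional mean of D is
   eta u . Sigma grad L(u) = 2 eta (u . v1)^2 (u . Sigma u - lambda_1) <= -2 rho eta L (1 - L),
   by the spectral bound u . Sigma u <= lambda_2 + rho (u . v1)^2. The centred term
   Q_t = D - E(D | F_(t-1)) has conditional mean zero, and D and its mean are both bounded
   by 2 eta B^2 sqrt L. *)

section \<open>The squared sine and its first-order change\<close>

lemma abs_inner_mult_inner_le: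
  fixes x a b :: "'a::real_inner"
  shows "\<bar>(x \<bullet> a) * (x \<bullet> b)\<bar> \<le> (norm x)\<^sup>2 * (norm a * norm b)"
proof -
  have "\<bar>(x \<bullet> a) * (x \<bullet> b)\<bar> \<le> (norm x * norm a) * (norm x * norm b)"
    unfolding abs_mult by (intro mult_mono Cauchy_Schwarz_ineq2) auto
  then show ?thesis by (simp add: power2_eq_square ac_simps)
qed

lemma power2_inner_unit_le: "norm u = 1 \<Longrightarrow> (x \<bullet> u)\<^sup>2 \<le> (norm x)\<^sup>2"
  using Cauchy_Schwarz_ineq2[of x u] by (metis abs_ge_zero mult.right_neutral power2_abs power_mono)

lemma sin2_nonneg: "0 \<le> sin2 x y"
proof -
  have "(x \<bullet> y)\<^sup>2 \<le> (norm x)\<^sup>2 * (norm y)\<^sup>2"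
    using Cauchy_Schwarz_ineq[of x y] by (simp add: power2_norm_eq_inner)
  then show ?thesis
    unfolding sin2_def by (cases "(norm x)\<^sup>2 * (norm y)\<^sup>2 = 0") (auto simp: divide_le_eq_1)
qed

lemma sin2_le_one: "sin2 x y \<le> 1"
  by (simp add: sin2_def)

lemma sin2_scaleR_left: "k \<noteq> 0 \<Longrightarrow> sin2 (k *\<^sub>R x) y = sin2 x y"
  by (simp add: sin2_def power_mult_distrib power2_abs)

lemma sin2_sgn_left: "sin2 (sgn x) y = sin2 x y"
  by (cases "x = 0") (simp_all add: sgn_div_norm sin2_scaleR_left)

lemma sin2_unit: "norm u = 1 \<Longrightarrow> norm w = 1 \<Longrightarrow> sin2 u w = 1 - (u \<bullet> w)\<^sup>2"
  by (simp add: sin2_def)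

lemma sin2_unit_right:
  "norm w = 1 \<Longrightarrow> z \<noteq> 0 \<Longrightarrow> sin2 z w = ((norm z)\<^sup>2 - (z \<bullet> w)\<^sup>2) / (norm z)\<^sup>2"
  by (simp add: sin2_def diff_divide_distrib)

lemma sgn_sgn_vector: "sgn (sgn x) = sgn (x :: 'a::real_normed_vector)"
  by (cases "x = 0") (simp_all add: sgn_div_norm)

definition rejection :: "'a::real_inner \<Rightarrow> 'a \<Rightarrow> 'a" where
  "rejection v w = w - (sgn v \<bullet> w) *\<^sub>R sgn v"

lemma norm_rejection:
  fixes v w :: "real^'p"
  assumes "norm w = 1"
  shows "norm (rejection v w) = sqrt (sin2 v w)"
proof (cases "v = 0")
  case True
  then show ?thesis by (simp add: rejection_def sin2_def assms)
next
  case False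
  define u where "u = sgn v"
  have u: "norm u = 1" using False by (simp add: u_def norm_sgn)
  have "u \<bullet> u = 1" "w \<bullet> w = 1" using u assms by (simp_all add: norm_eq_1)
  then have "(norm (rejection v w))\<^sup>2 = 1 - (u \<bullet> w)\<^sup>2"
    unfolding rejection_def u_def[symmetric] power2_norm_eq_inner
    by (simp add: inner_diff_left inner_diff_right inner_commute power2_eq_square)
  also have "\<dots> = sin2 v w"
    using sin2_unit[OF u assms] by (simp add: u_def sin2_sgn_left)
  finally show ?thesis by (simp add: real_sqrt_unique)
qed

(* The gradient of v \<mapsto> sin2 v w at a unit vector v, for unit w. *)
definition sin2_grad :: "real^'p \<Rightarrow> real^'p \<Rightarrow> real^'p" where
  "sin2_grad w v = (- 2 * (sgn v \<bullet> w)) *\<^sub>R rejection v w"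

(* The derivative of sin2 along the step \<eta> (x \<bullet> u) x from u = sgn v: to first order in \<eta>, the
   change of sin2 under either update. *)
definition sin2_first_order :: "real^'p \<Rightarrow> real \<Rightarrow> real^'p \<Rightarrow> real^'p \<Rightarrow> real" where
  "sin2_first_order w \<eta> x v = \<eta> * ((x \<bullet> sgn v) * (x \<bullet> sin2_grad w v))"

lemma sin2_first_order_sgn: "sin2_first_order w \<eta> x (sgn v) = sin2_first_order w \<eta> x v"
  by (simp add: sin2_first_order_def sin2_grad_def rejection_def sgn_sgn_vector)

lemma sin2_first_order_unit:
  "norm u = 1 \<Longrightarrow>
    sin2_first_order w \<eta> x u = - 2 * \<eta> * (u \<bullet> w) * (x \<bullet> u) * (x \<bullet> w - (u \<bullet> w) * (x \<bullet> u))"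
  by (simp add: sin2_first_order_def sin2_grad_def rejection_def sgn_div_norm inner_diff_right
      inner_commute)

lemma norm_sin2_grad_le:
  fixes v w :: "real^'p"
  assumes w: "norm w = 1"
  shows "norm (sin2_grad w v) \<le> 2 * sqrt (sin2 v w)"
proof -
  have "\<bar>sgn v \<bullet> w\<bar> \<le> 1"
    using Cauchy_Schwarz_ineq2[of "sgn v" w] w by (simp add: norm_sgn split: if_splits)
  then have "\<bar>sgn v \<bullet> w\<bar> * (2 * sqrt (sin2 v w)) \<le> 1 * (2 * sqrt (sin2 v w))"
    by (intro mult_right_mono) (auto simp: sin2_nonneg)
  then show ?thesis by (simp add: sin2_grad_def norm_rejection[OF w] abs_mult)
qed

lemma abs_sin2_first_order_le:
  fixes w x v :: "real^'p"
  assumes w: "norm w = 1" and x: "norm x \<le> B" and \<eta>: "0 \<le> \<eta>"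
  shows "\<bar>sin2_first_order w \<eta> x v\<bar> \<le> 2 * \<eta> * B\<^sup>2 * sqrt (sin2 v w)"
proof -
  have "(norm x)\<^sup>2 \<le> B\<^sup>2" using x by (simp add: power_mono)
  moreover have "norm (sgn v) * norm (sin2_grad w v) \<le> 1 * (2 * sqrt (sin2 v w))"
    using norm_sin2_grad_le[OF w] by (intro mult_mono) (auto simp: norm_sgn)
  ultimately have "\<bar>(x \<bullet> sgn v) * (x \<bullet> sin2_grad w v)\<bar> \<le> B\<^sup>2 * (2 * sqrt (sin2 v w))"
    using abs_inner_mult_inner_le[of x "sgn v" "sin2_grad w v"]
    by (elim order_trans) (rule mult_mono, simp_all)
  then show ?thesis
    using \<eta> by (simp add: sin2_first_order_def abs_mult mult_left_mono ac_simps)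
qed

lemma sin2_kras_step_unit_le:
  fixes u w x :: "real^'p"
  assumes u: "norm u = 1" and w: "norm w = 1" and x: "norm x \<le> B"
  shows "sin2 (kras_step \<eta> x u) w \<le> sin2 u w + sin2_first_order w \<eta> x u + \<eta>\<^sup>2 * B ^ 4"
proof -
  define y c where "y = x \<bullet> u" and "c = u \<bullet> w"
  define z where "z = u + (\<eta> * y) *\<^sub>R (x - y *\<^sub>R u)"
  have uu: "u \<bullet> u = 1" using u by (simp add: norm_eq_1)
  have step: "kras_step \<eta> x u = z" using u by (simp add: kras_step_def Let_def z_def y_def)
  have first_order: "sin2_first_order w \<eta> x u = - 2 * \<eta> * c * y * (x \<bullet> w - c * y)"
    using sin2_first_order_unit[OF u] by (simp add: c_def y_def)
  have zw: "z \<bullet> w = c + \<eta> * y * (x \<bullet> w - y * c)"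
    by (simp add: z_def c_def inner_add_left inner_diff_left algebra_simps)
  have zz: "(norm z)\<^sup>2 = 1 + \<eta>\<^sup>2 * y\<^sup>2 * ((norm x)\<^sup>2 - y\<^sup>2)"
    unfolding power2_norm_eq_inner z_def
    by (simp add: inner_add_left inner_add_right inner_diff_left inner_diff_right uu y_def
        inner_commute[of x u] algebra_simps power2_eq_square)
  have y_le: "y\<^sup>2 \<le> (norm x)\<^sup>2" using power2_inner_unit_le[OF u] by (simp add: y_def)
  have "(norm x)\<^sup>2 \<le> B\<^sup>2" using x by (simp add: power_mono)
  then have "0 \<le> (norm x)\<^sup>2 - y\<^sup>2" "(norm x)\<^sup>2 - y\<^sup>2 \<le> B\<^sup>2" "y\<^sup>2 \<le> B\<^sup>2"
    using y_le zero_le_power2[of y] by linarith+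
  then have "y\<^sup>2 * ((norm x)\<^sup>2 - y\<^sup>2) \<le> B\<^sup>2 * B\<^sup>2"
    by (intro mult_mono) auto
  then have rem: "\<eta>\<^sup>2 * y\<^sup>2 * ((norm x)\<^sup>2 - y\<^sup>2) \<le> \<eta>\<^sup>2 * B ^ 4"
    by (simp add: mult_left_mono mult.assoc flip: power_add)
  have z_ge: "1 \<le> (norm z)\<^sup>2" using zz y_le by simp
  have "(z \<bullet> w)\<^sup>2 \<le> (norm z)\<^sup>2" using power2_inner_unit_le[OF w] .
  have "sin2 z w = ((norm z)\<^sup>2 - (z \<bullet> w)\<^sup>2) / (norm z)\<^sup>2"
    using z_ge by (intro sin2_unit_right[OF w]) auto
  also have "\<dots> \<le> (norm z)\<^sup>2 - (z \<bullet> w)\<^sup>2"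
    using z_ge \<open>(z \<bullet> w)\<^sup>2 \<le> (norm z)\<^sup>2\<close> by (simp add: divide_le_eq mult_le_cancel_left1)
  also have "\<dots> = (1 - c\<^sup>2) - 2 * \<eta> * c * y * (x \<bullet> w - c * y)
      + \<eta>\<^sup>2 * y\<^sup>2 * ((norm x)\<^sup>2 - y\<^sup>2) - (\<eta> * y * (x \<bullet> w - y * c))\<^sup>2"
    unfolding zz zw by (simp add: algebra_simps power2_eq_square)
  also have "\<dots> \<le> sin2 u w + sin2_first_order w \<eta> x u + \<eta>\<^sup>2 * B ^ 4"
    using rem sin2_unit[OF u w] zero_le_power2[of "\<eta> * y * (x \<bullet> w - y * c)"]
    unfolding first_order c_def by linarith
  finally show ?thesis unfolding step .
qed

section \<open>One step of the updates\<close>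

lemma kras_step_scaleR: "k \<noteq> 0 \<Longrightarrow> kras_step \<eta> x (k *\<^sub>R v) = k *\<^sub>R kras_step \<eta> x v"
  by (cases "v = 0")
    (simp_all add: kras_step_def Let_def scaleR_add_right scaleR_diff_right power2_eq_square
      field_simps)

lemma kras_step_nonzero:
  assumes "v \<noteq> 0"
  shows "kras_step \<eta> x v \<noteq> 0"
proof -
  have "v \<bullet> kras_step \<eta> x v = (norm v)\<^sup>2"
    using assms by (simp add: kras_step_def Let_def inner_add_right inner_diff_right
        inner_commute[of v x] power2_norm_eq_inner)
  then show ?thesis using assms by auto
qed

lemma sin2_kras_step_le:
  fixes v w x :: "real^'p"
  assumes v: "v \<noteq> 0" and w: "norm w = 1" and x: "norm x \<le> B"
  shows "sin2 (kras_step \<eta> x v) w \<le> sin2 v w + sin2_first_order w \<eta> x v + \<eta>\<^sup>2 * B ^ 4"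
proof -
  have "kras_step \<eta> x v = kras_step \<eta> x (norm v *\<^sub>R sgn v)"
    using v by (simp add: sgn_div_norm)
  also have "\<dots> = norm v *\<^sub>R kras_step \<eta> x (sgn v)"
    using v by (simp add: kras_step_scaleR)
  finally have "sin2 (kras_step \<eta> x v) w = sin2 (kras_step \<eta> x (sgn v)) w"
    using v by (simp add: sin2_scaleR_left)
  then show ?thesis
    using sin2_kras_step_unit_le[of "sgn v" w x B \<eta>] v w x
    by (simp add: norm_sgn sin2_sgn_left sin2_first_order_sgn)
qed

lemma oja_step_sgn: "oja_step \<eta> x v = sgn (v + (\<eta> * (x \<bullet> v)) *\<^sub>R x)"
  by (simp add: oja_step_def Let_def sgn_div_norm)

lemma oja_step_scaleR:
  assumes "0 < k"
  shows "oja_step \<eta> x (k *\<^sub>R v) = oja_step \<eta> x v"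
proof -
  have "k *\<^sub>R v + (\<eta> * (x \<bullet> k *\<^sub>R v)) *\<^sub>R x = k *\<^sub>R (v + (\<eta> * (x \<bullet> v)) *\<^sub>R x)"
    by (simp add: algebra_simps)
  then show ?thesis using assms by (simp add: oja_step_sgn sgn_scaleR)
qed

lemma oja_step_nonzero:
  assumes "0 \<le> \<eta>" and "v \<noteq> 0"
  shows "oja_step \<eta> x v \<noteq> 0"
proof -
  have "v \<bullet> (v + (\<eta> * (x \<bullet> v)) *\<^sub>R x) = (norm v)\<^sup>2 + \<eta> * (x \<bullet> v)\<^sup>2"
    by (simp add: inner_add_right inner_commute[of v x] dot_square_norm power2_eq_square)
  also have "\<dots> > 0" using assms by (simp add: add_pos_nonneg)
  finally show ?thesis by (auto simp: oja_step_sgn sgn_zero_iff)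
qed

(* In the Oja step: n = norm x ^ 2, y = x \<bullet> u, c = u \<bullet> w, p = x \<bullet> w, D is the first-order
   term and 1 + a the squared norm of the unnormalised update. *)
lemma oja_remainder_le:
  fixes \<eta> B n y c p D :: real
  assumes \<eta>: "0 \<le> \<eta>" and n: "0 \<le> n" "n \<le> B\<^sup>2" and y: "y\<^sup>2 \<le> B\<^sup>2" and c: "c\<^sup>2 \<le> 1"
    and D: "\<bar>D\<bar> \<le> 2 * \<eta> * B\<^sup>2"
  defines "a \<equiv> 2 * \<eta> * y\<^sup>2 + \<eta>\<^sup>2 * y\<^sup>2 * n"
  shows "(\<eta>\<^sup>2 * y\<^sup>2 * (n * c\<^sup>2 - p\<^sup>2) - a * D) / (1 + a) \<le> (5 * B ^ 4 + 2 * \<eta> * B ^ 6) * \<eta>\<^sup>2"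
proof -
  define R where "R = (5 * B ^ 4 + 2 * \<eta> * B ^ 6) * \<eta>\<^sup>2"
  have a0: "0 \<le> a" using \<eta> n by (simp add: a_def)
  have "\<eta>\<^sup>2 * (y\<^sup>2 * n) \<le> \<eta>\<^sup>2 * (B\<^sup>2 * B\<^sup>2)"
    using y n by (intro mult_left_mono mult_mono) auto
  moreover have "2 * \<eta> * y\<^sup>2 \<le> 2 * \<eta> * B\<^sup>2" using y \<eta> by (simp add: mult_left_mono)
  ultimately have a_le: "a \<le> 2 * \<eta> * B\<^sup>2 + \<eta>\<^sup>2 * B ^ 4"
    by (simp add: a_def mult.assoc flip: power_add)
  have "n * c\<^sup>2 - p\<^sup>2 \<le> B\<^sup>2"
    using mult_left_mono[OF c n(1)] n(2) zero_le_power2[of p] by linarith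
  then have "y\<^sup>2 * (n * c\<^sup>2 - p\<^sup>2) \<le> B\<^sup>2 * B\<^sup>2"
    using y by (metis mult_left_mono mult_right_mono order_trans zero_le_power2)
  then have "\<eta>\<^sup>2 * y\<^sup>2 * (n * c\<^sup>2 - p\<^sup>2) \<le> \<eta>\<^sup>2 * (B\<^sup>2 * B\<^sup>2)"
    by (simp add: mult.assoc mult_left_mono)
  moreover have "- (a * D) \<le> (2 * \<eta> * B\<^sup>2 + \<eta>\<^sup>2 * B ^ 4) * (2 * \<eta> * B\<^sup>2)"
  proof -
    have "- (a * D) \<le> a * \<bar>D\<bar>"
      using a0 by (metis abs_ge_minus_self mult_left_mono mult_minus_right)
    also have "\<dots> \<le> (2 * \<eta> * B\<^sup>2 + \<eta>\<^sup>2 * B ^ 4) * (2 * \<eta> * B\<^sup>2)"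
      using a0 \<eta> by (intro mult_mono[OF a_le D]) auto
    finally show ?thesis .
  qed
  moreover have "\<eta>\<^sup>2 * (B\<^sup>2 * B\<^sup>2) + (2 * \<eta> * B\<^sup>2 + \<eta>\<^sup>2 * B ^ 4) * (2 * \<eta> * B\<^sup>2) = R"
    by (simp add: R_def algebra_simps power2_eq_square power4_eq_xxxx numeral_eq_Suc)
  ultimately have "\<eta>\<^sup>2 * y\<^sup>2 * (n * c\<^sup>2 - p\<^sup>2) - a * D \<le> R * (1 + a)"
    using a0 \<eta> by (simp add: R_def distrib_left add_increasing2)
  then show ?thesis using a0 by (simp add: R_def divide_le_eq)
qed

lemma sin2_oja_step_unit_le:
  fixes u w x :: "real^'p"
  assumes u: "norm u = 1" and w: "norm w = 1" and x: "norm x \<le> B" and \<eta>: "0 \<le> \<eta>"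
  shows "sin2 (oja_step \<eta> x u) w
    \<le> sin2 u w + sin2_first_order w \<eta> x u + (5 * B ^ 4 + 2 * \<eta> * B ^ 6) * \<eta>\<^sup>2"
proof -
  define y c L D where "y = x \<bullet> u" and "c = u \<bullet> w" and "L = sin2 u w"
    and "D = sin2_first_order w \<eta> x u"
  define z where "z = u + (\<eta> * y) *\<^sub>R x"
  define a where "a = 2 * \<eta> * y\<^sup>2 + \<eta>\<^sup>2 * y\<^sup>2 * (norm x)\<^sup>2"
  define E where "E = \<eta>\<^sup>2 * y\<^sup>2 * ((norm x)\<^sup>2 * c\<^sup>2 - (x \<bullet> w)\<^sup>2) - a * D"
  have uu: "u \<bullet> u = 1" using u by (simp add: norm_eq_1)
  have L: "L = 1 - c\<^sup>2" using sin2_unit[OF u w] by (simp add: L_def c_def)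
  have D: "D = - 2 * \<eta> * c * y * (x \<bullet> w - c * y)"
    using sin2_first_order_unit[OF u] by (simp add: D_def c_def y_def)
  have zz: "(norm z)\<^sup>2 = 1 + a"
    unfolding power2_norm_eq_inner z_def a_def
    by (simp add: inner_add_left inner_add_right uu y_def inner_commute[of x u] algebra_simps
        power2_eq_square)
  have zw: "z \<bullet> w = c + \<eta> * y * (x \<bullet> w)"
    by (simp add: z_def c_def inner_add_left)
  have expand: "(norm z)\<^sup>2 - (z \<bullet> w)\<^sup>2 = (1 + a) * (L + D) + E"
    unfolding zz zw L D E_def a_def by (simp add: algebra_simps power2_eq_square)
  have a0: "0 \<le> a" using \<eta> by (simp add: a_def)
  have xB: "(norm x)\<^sup>2 \<le> B\<^sup>2" using x by (simp add: power_mono)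
  have "\<bar>D\<bar> \<le> 2 * \<eta> * B\<^sup>2 * sqrt L"
    unfolding D_def L_def by (rule abs_sin2_first_order_le[OF w x \<eta>])
  also have "\<dots> \<le> 2 * \<eta> * B\<^sup>2"
    using \<eta> sin2_le_one[of u w] sin2_nonneg[of u w] by (simp add: L_def mult_left_le)
  finally have "E / (1 + a) \<le> (5 * B ^ 4 + 2 * \<eta> * B ^ 6) * \<eta>\<^sup>2"
    unfolding E_def a_def
    using power2_inner_unit_le[OF u, of x] power2_inner_unit_le[OF w, of u] u xB
    by (intro oja_remainder_le[OF \<eta>]) (auto simp: y_def c_def)
  have "sin2 (oja_step \<eta> x u) w = sin2 z w"
    by (simp add: oja_step_sgn sin2_sgn_left z_def y_def)
  also have "\<dots> = ((norm z)\<^sup>2 - (z \<bullet> w)\<^sup>2) / (norm z)\<^sup>2"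
    using zz a0 by (intro sin2_unit_right[OF w]) auto
  also have "\<dots> = L + D + E / (1 + a)"
    using a0 by (subst expand) (simp add: zz field_simps)
  finally show ?thesis
    using \<open>E / (1 + a) \<le> _\<close> unfolding L_def D_def by linarith
qed

lemma sin2_oja_step_le:
  fixes v w x :: "real^'p"
  assumes v: "v \<noteq> 0" and w: "norm w = 1" and x: "norm x \<le> B" and \<eta>: "0 \<le> \<eta>"
  shows "sin2 (oja_step \<eta> x v) w
    \<le> sin2 v w + sin2_first_order w \<eta> x v + (5 * B ^ 4 + 2 * \<eta> * B ^ 6) * \<eta>\<^sup>2"
proof -
  have "oja_step \<eta> x v = oja_step \<eta> x (sgn v)"
    using v oja_step_scaleR[of "norm v" \<eta> x "sgn v"] by (simp add: sgn_div_norm)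
  then show ?thesis
    using sin2_oja_step_unit_le[of "sgn v" w x B \<eta>] v w x \<eta>
    by (simp add: norm_sgn sin2_sgn_left sin2_first_order_sgn)
qed

section \<open>The drift of the first-order term\<close>

lemma orthonormal_expansion:
  fixes e :: "nat \<Rightarrow> real^'p"
  assumes orth: "\<forall>i<CARD('p). \<forall>j<CARD('p). e i \<bullet> e j = (if i = j then 1 else 0)"
  shows "x = (\<Sum>i<CARD('p). (x \<bullet> e i) *\<^sub>R e i)"
proof -
  define n where "n = CARD('p)"
  define E where "E = e ` {..<n}"
  have "inj_on e {..<n}"
    using orth by (intro inj_onI) (metis lessThan_iff n_def zero_neq_one)
  then have "card E = n" by (simp add: E_def card_image)
  moreover have "independent E"
  proof (rule pairwise_orthogonal_independent)
    show "pairwise orthogonal E"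
      using orth by (auto simp: E_def n_def pairwise_def orthogonal_def)
    show "0 \<notin> E"
      using orth by (force simp: E_def n_def)
  qed
  ultimately have span: "UNIV \<subseteq> span E"
    by (intro card_ge_dim_independent) (simp_all add: n_def)
  define r where "r = x - (\<Sum>i<n. (x \<bullet> e i) *\<^sub>R e i)"
  have "orthogonal r y" if "y \<in> E" for y
  proof -
    obtain j where j: "j < n" "y = e j" using \<open>y \<in> E\<close> E_def by auto
    have "(\<Sum>i<n. (x \<bullet> e i) * (e i \<bullet> e j)) = (\<Sum>i<n. if i = j then x \<bullet> e j else 0)"
      using orth j n_def by (intro sum.cong refl) auto
    then show ?thesis
      using j by (simp add: orthogonal_def r_def inner_diff_left inner_sum_left)
  qed
  then have "orthogonal r r" using orthogonal_to_span span by blast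
  then show ?thesis by (simp add: orthogonal_def r_def n_def)
qed

lemma orthonormal_inner_expansion:
  fixes e :: "nat \<Rightarrow> real^'p"
  assumes "\<forall>i<CARD('p). \<forall>j<CARD('p). e i \<bullet> e j = (if i = j then 1 else 0)"
  shows "y \<bullet> x = (\<Sum>i<CARD('p). (x \<bullet> e i) * (y \<bullet> e i))"
  by (subst orthonormal_expansion[OF assms, of x]) (simp add: inner_sum_right)

lemma eigenbasis_matrix_vector_mult:
  fixes S :: "real^'p^'p" and e :: "nat \<Rightarrow> real^'p"
  assumes "\<forall>i<CARD('p). \<forall>j<CARD('p). e i \<bullet> e j = (if i = j then 1 else 0)"
    and eig: "\<forall>i<CARD('p). S *v e i = lam i *\<^sub>R e i"
  shows "S *v x = (\<Sum>i<CARD('p). ((x \<bullet> e i) * lam i) *\<^sub>R e i)"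
  by (subst orthonormal_expansion[OF assms(1), of x])
    (use eig in \<open>simp add: linear_sum[OF matrix_vector_mul_linear] matrix_vector_mult_scaleR\<close>)

lemma eigenvector_inner_eigenbasis:
  fixes S :: "real^'p^'p" and e :: "nat \<Rightarrow> real^'p"
  assumes orth: "\<forall>i<CARD('p). \<forall>j<CARD('p). e i \<bullet> e j = (if i = j then 1 else 0)"
    and eig: "\<forall>i<CARD('p). S *v e i = lam i *\<^sub>R e i"
    and v: "S *v v = \<mu> *\<^sub>R v" and j: "j < CARD('p)" "lam j \<noteq> \<mu>"
  shows "v \<bullet> e j = 0"
proof -
  have "\<mu> * (v \<bullet> e j) = (S *v v) \<bullet> e j" using v by simp
  also have "\<dots> = (\<Sum>i<CARD('p). if i = j then lam j * (v \<bullet> e j) else 0)"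
    unfolding eigenbasis_matrix_vector_mult[OF orth eig] inner_sum_left
    using orth j by (intro sum.cong refl) auto
  finally have "(\<mu> - lam j) * (v \<bullet> e j) = 0" using j by (simp add: algebra_simps)
  then show ?thesis using j by simp
qed

lemma ordered_eigenvalues_rayleigh_le:
  fixes S :: "real^'p^'p" and u v1 :: "real^'p"
  assumes eigs: "ordered_eigenvalues S lam" and gap: "lam 1 < lam 0"
    and v1: "norm v1 = 1" "S *v v1 = lam 0 *\<^sub>R v1" and u: "norm u = 1"
  shows "u \<bullet> (S *v u) \<le> lam 1 + (lam 0 - lam 1) * (u \<bullet> v1)\<^sup>2"
proof -
  define n where "n = CARD('p)"
  obtain e where orth: "\<forall>i<n. \<forall>j<n. e i \<bullet> e j = (if i = j then 1 else 0)"
    and eig: "\<forall>i<n. S *v e i = lam i *\<^sub>R e i"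
    and mono: "\<forall>i j. i \<le> j \<longrightarrow> j < n \<longrightarrow> lam j \<le> lam i"
    using eigs unfolding ordered_eigenvalues_def n_def by blast
  note inner_expand = orthonormal_inner_expansion[OF orth[unfolded n_def], folded n_def]
  have n: "0 < n" by (simp add: n_def)
  have sum_head: "(\<Sum>i<n. f i) = f 0" if "\<And>i. 1 \<le> i \<Longrightarrow> i < n \<Longrightarrow> f i = 0" for f
  proof -
    have "(\<Sum>i<n. f i) = (\<Sum>i<n. if i = 0 then f 0 else 0)"
      using that by (intro sum.cong) auto
    then show ?thesis using n by simp
  qed
  have top: "v1 \<bullet> e j = 0" if j: "1 \<le> j" "j < n" for j
  proof (rule eigenvector_inner_eigenbasis[OF orth[unfolded n_def] eig[unfolded n_def] v1(2)])
    have "lam j \<le> lam 1" using mono j by blast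
    then show "lam j \<noteq> lam 0" using gap by simp
  qed (use j in \<open>simp add: n_def\<close>)
  define b where "b i = u \<bullet> e i" for i
  have "v1 \<bullet> v1 = (v1 \<bullet> e 0) * (v1 \<bullet> e 0)" "u \<bullet> v1 = (v1 \<bullet> e 0) * b 0"
    unfolding inner_expand[where x = v1] b_def using top by (simp_all add: sum_head)
  then have c: "(u \<bullet> v1)\<^sup>2 = (b 0)\<^sup>2"
    using v1(1) by (simp add: power2_eq_square dot_square_norm)
  have b_sum: "(\<Sum>i<n. (b i)\<^sup>2) = 1"
    using inner_expand[of u u] u by (simp add: b_def power2_eq_square norm_eq_1)
  have "u \<bullet> (S *v u) = (\<Sum>i<n. lam i * (b i)\<^sup>2)"
    using eigenbasis_matrix_vector_mult[OF orth[unfolded n_def] eig[unfolded n_def]]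
    by (simp add: n_def inner_sum_right b_def power2_eq_square ac_simps)
  also have "\<dots> = lam 1 + (\<Sum>i<n. (lam i - lam 1) * (b i)\<^sup>2)"
    using b_sum by (simp add: left_diff_distrib sum_subtractf flip: sum_distrib_left)
  also have "\<dots> \<le> lam 1 + (\<Sum>i<n. if i = 0 then (lam 0 - lam 1) * (b 0)\<^sup>2 else 0)"
    using mono by (intro add_left_mono sum_mono) (auto intro: mult_nonpos_nonneg)
  finally show ?thesis using n c by simp
qed

definition sin2_first_order_mean :: "real^'p^'p \<Rightarrow> real^'p \<Rightarrow> real \<Rightarrow> real^'p \<Rightarrow> real" where
  "sin2_first_order_mean S w \<eta> v = \<eta> * (sgn v \<bullet> (S *v sin2_grad w v))"

lemma sin2_first_order_mean_le:
  fixes S :: "real^'p^'p" and v w :: "real^'p"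
  assumes eigs: "ordered_eigenvalues S lam" and gap: "lam 1 < lam 0"
    and w: "norm w = 1" "S *v w = lam 0 *\<^sub>R w" and v: "v \<noteq> 0" and \<eta>: "0 \<le> \<eta>"
  shows "sin2_first_order_mean S w \<eta> v
    \<le> - 2 * (lam 0 - lam 1) * \<eta> * sin2 v w * (1 - sin2 v w)"
proof -
  define u c where "u = sgn v" and "c = u \<bullet> w"
  have u: "norm u = 1" using v by (simp add: u_def norm_sgn)
  have L: "sin2 v w = 1 - c\<^sup>2"
    using sin2_unit[OF u w(1)] by (simp add: u_def c_def sin2_sgn_left)
  have "sin2_first_order_mean S w \<eta> v = 2 * \<eta> * c\<^sup>2 * (u \<bullet> (S *v u) - lam 0)"
    using w(2)
    by (simp add: sin2_first_order_mean_def sin2_grad_def rejection_def u_def[symmetric]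
        c_def[symmetric] matrix_vector_mult_diff_distrib matrix_vector_mult_scaleR
        inner_diff_right algebra_simps power2_eq_square)
  also have "\<dots> \<le> 2 * \<eta> * c\<^sup>2 * (- (lam 0 - lam 1) * (1 - c\<^sup>2))"
    using ordered_eigenvalues_rayleigh_le[OF eigs gap w u] \<eta>
    by (intro mult_left_mono) (auto simp: c_def algebra_simps)
  finally show ?thesis unfolding L by (simp add: algebra_simps)
qed

section \<open>Filtrations, independence and conditional expectations\<close>

lemma space_nat_filtration [simp]: "space (nat_filtration M Z t) = space M"
  by (auto simp: nat_filtration_def space_measure_of_conv)

lemma sets_nat_filtration:
  "sets (nat_filtration M Z t) =
    sigma_sets (space M) (\<Union>i\<in>{..t}. {Z i -` A \<inter> space M | A. A \<in> sets borel})"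
  unfolding nat_filtration_def by (rule sets_measure_of) auto

lemma measurable_nat_filtration:
  fixes Z :: "nat \<Rightarrow> 'a \<Rightarrow> real^'p"
  assumes "i \<le> t"
  shows "Z i \<in> borel_measurable (nat_filtration M Z t)"
proof (rule measurableI)
  fix A :: "(real^'p) set" assume "A \<in> sets borel"
  then have "Z i -` A \<inter> space M \<in> (\<Union>i\<in>{..t}. {Z i -` A \<inter> space M | A. A \<in> sets borel})"
    using assms by blast
  then show "Z i -` A \<inter> space (nat_filtration M Z t) \<in> sets (nat_filtration M Z t)"
    unfolding sets_nat_filtration by auto
qed simp

lemma subalgebra_nat_filtration:
  assumes "\<And>i. Z i \<in> borel_measurable M"
  shows "subalgebra M (nat_filtration M Z t)"
  unfolding subalgebra_def sets_nat_filtration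
  using assms by (auto intro!: sets.sigma_sets_subset measurable_sets)

lemma subalgebra_nat_filtration_mono:
  assumes "s \<le> t"
  shows "subalgebra (nat_filtration M Z t) (nat_filtration M Z s)"
  unfolding subalgebra_def sets_nat_filtration
  using assms by (fastforce intro!: sigma_sets_subseteq)

lemma (in prob_space) indep_set_nat_filtration:
  fixes Z :: "nat \<Rightarrow> 'a \<Rightarrow> real^'p"
  assumes indep: "indep_vars (\<lambda>_. borel) Z UNIV" and "s < t"
  shows "indep_set (sets (nat_filtration M Z s))
    (sigma_sets (space M) {Z t -` A \<inter> space M | A. A \<in> sets borel})"
proof -
  define E where "E i = {Z i -` A \<inter> space M | A. A \<in> sets (borel :: (real^'p) measure)}" for i
  define I where "I b = (if b then {..s} else {t})" for b
  have "indep_sets (\<lambda>b. sigma_sets (space M) (\<Union>i\<in>I b. E i)) UNIV"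
  proof (rule indep_sets_collect_sigma)
    show "indep_sets E (\<Union>b. I b)"
      using indep unfolding indep_vars_def2 E_def by (auto intro: indep_sets_mono_index)
    show "Int_stable (E i)" for i
    proof (rule Int_stableI)
      fix a b assume "a \<in> E i" "b \<in> E i"
      then obtain A A' where "a = Z i -` A \<inter> space M" "b = Z i -` A' \<inter> space M"
        and "A \<in> sets borel" "A' \<in> sets borel"
        by (auto simp: E_def)
      then show "a \<inter> b \<in> E i"
        unfolding E_def by (intro CollectI exI[of _ "A \<inter> A'"]) auto
    qed
    show "disjoint_family_on I UNIV"
      using \<open>s < t\<close> by (auto simp: disjoint_family_on_def I_def)
  qed
  moreover have "sigma_sets (space M) (E t)
      = sigma_sets (space M) {Z t -` A \<inter> space M | A. A \<in> sets borel}"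
    by (simp add: E_def)
  ultimately show ?thesis
    unfolding indep_set_def sets_nat_filtration
    by (elim indep_sets_mono_sets) (auto simp: I_def E_def split: bool.split)
qed

lemma (in prob_space) indep_set_mono:
  "indep_set A B \<Longrightarrow> A' \<subseteq> A \<Longrightarrow> B' \<subseteq> B \<Longrightarrow> indep_set A' B'"
  unfolding indep_sets2_eq by blast

lemma (in prob_space) real_cond_exp_indep:
  fixes Y :: "'a \<Rightarrow> 'b" and g :: "'b \<Rightarrow> real"
  assumes F: "subalgebra M F" and Y: "Y \<in> measurable M N"
    and indep: "indep_set (sets F) (sigma_sets (space M) {Y -` A \<inter> space M | A. A \<in> sets N})"
    and g: "g \<in> borel_measurable N" and int: "integrable M (\<lambda>\<omega>. g (Y \<omega>))"
  shows "AE \<omega> in M. real_cond_exp M F (\<lambda>\<omega>. g (Y \<omega>)) \<omega> = expectation (\<lambda>\<omega>. g (Y \<omega>))"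
proof -
  interpret sigma_finite_subalgebra M F
    using F by (intro finite_measure_subalgebra_is_sigma_finite) unfold_locales
  show ?thesis
  proof (rule real_cond_exp_charact)
    fix A assume A: "A \<in> sets F"
    then have A_events: "A \<in> events" using F by (auto simp: subalgebra_def)
    have "indicator A \<in> borel_measurable F" using A by simp
    moreover have "space F = space M" using F by (simp add: subalgebra_def)
    ultimately have
      "sigma_sets (space M) {indicator A -` B \<inter> space M | B. B \<in> sets borel} \<subseteq> sets F"
      by (intro sets.sigma_sets_subset')
        (auto dest: measurable_sets intro: sets.top[of F, simplified])
    moreover have "sigma_sets (space M) {(\<lambda>\<omega>. g (Y \<omega>)) -` B \<inter> space M | B. B \<in> sets borel}
        \<subseteq> sigma_sets (space M) {Y -` A \<inter> space M | A. A \<in> sets N}"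
    proof (rule sigma_sets_subseteq, safe)
      fix B :: "real set" assume "B \<in> sets borel"
      then have "g -` B \<inter> space N \<in> sets N" using g by (simp add: measurable_sets)
      moreover have "(\<lambda>\<omega>. g (Y \<omega>)) -` B \<inter> space M = Y -` (g -` B \<inter> space N) \<inter> space M"
        using measurable_space[OF Y] by auto
      ultimately show "\<exists>A'. (\<lambda>\<omega>. g (Y \<omega>)) -` B \<inter> space M = Y -` A' \<inter> space M \<and> A' \<in> sets N"
        by blast
    qed
    ultimately have "indep_var borel (indicator A :: 'a \<Rightarrow> real) borel (\<lambda>\<omega>. g (Y \<omega>))"
      using A_events int unfolding indep_var_eq by (auto intro: indep_set_mono[OF indep])
    then have "(\<integral>\<omega>. indicator A \<omega> * g (Y \<omega>) \<partial>M) = prob A * expectation (\<lambda>\<omega>. g (Y \<omega>))"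
      using A_events int
      by (subst indep_var_lebesgue_integral) (auto simp: emeasure_eq_measure)
    then show "(\<integral>\<omega>\<in>A. g (Y \<omega>) \<partial>M) = (\<integral>\<omega>\<in>A. expectation (\<lambda>\<omega>. g (Y \<omega>)) \<partial>M)"
      using A_events by (simp add: set_lebesgue_integral_def)
  qed (use int in auto)
qed

lemma borel_measurable_vec_nth [measurable]:
  fixes f :: "'a \<Rightarrow> real^'p"
  assumes "f \<in> borel_measurable M"
  shows "(\<lambda>x. f x $ i) \<in> borel_measurable M"
  using assms by (intro borel_measurable_continuous_on[OF continuous_on_component] continuous_on_id)

definition second_moment :: "'a measure \<Rightarrow> ('a \<Rightarrow> real^'p) \<Rightarrow> real^'p^'p" where
  "second_moment M X = (\<integral>\<omega>. (\<chi> i j. X \<omega> $ i * X \<omega> $ j) \<partial>M)"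

lemma norm_outer_product: "norm (\<chi> i j. x $ i * x $ j) = (norm x)\<^sup>2" for x :: "real^'p"
proof -
  have row: "(\<chi> i j. x $ i * x $ j) $ i = x $ i *\<^sub>R x" for i by (simp add: vec_eq_iff)
  have "norm (\<chi> i j. x $ i * x $ j) = L2_set (\<lambda>i. norm x * \<bar>x $ i\<bar>) UNIV"
    unfolding norm_vec_def[of "\<chi> i j. x $ i * x $ j"] row by (simp add: ac_simps)
  also have "\<dots> = norm x * L2_set (\<lambda>i. norm (x $ i)) UNIV"
    by (simp add: L2_set_right_distrib)
  also have "\<dots> = norm x * norm x" by (simp only: norm_vec_def)
  finally show ?thesis by (simp add: power2_eq_square)
qed

lemma borel_measurable_outer_product [measurable]:
  fixes X :: "'a \<Rightarrow> real^'p"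
  assumes "X \<in> borel_measurable M"
  shows "(\<lambda>\<omega>. \<chi> i j. X \<omega> $ i * X \<omega> $ j) \<in> borel_measurable M"
proof -
  have "(\<lambda>x::real^'p. \<chi> i j. x $ i * x $ j) \<in> borel_measurable borel"
    by (intro borel_measurable_continuous_onI continuous_on_vec_lambda continuous_intros)
  from measurable_compose[OF assms this] show ?thesis by simp
qed

lemma (in prob_space) integrable_outer_product:
  fixes X :: "'a \<Rightarrow> real^'p"
  assumes "X \<in> borel_measurable M" and "AE \<omega> in M. norm (X \<omega>) \<le> B"
  shows "integrable M (\<lambda>\<omega>. \<chi> i j. X \<omega> $ i * X \<omega> $ j)"
proof (rule integrable_const_bound)
  show "AE \<omega> in M. norm (\<chi> i j. X \<omega> $ i * X \<omega> $ j) \<le> B\<^sup>2"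
    using assms(2) by eventually_elim (simp add: norm_outer_product power_mono)
qed (use assms(1) in measurable)

lemma (in prob_space) second_moment_nth:
  fixes X :: "'a \<Rightarrow> real^'p"
  assumes "X \<in> borel_measurable M" and "AE \<omega> in M. norm (X \<omega>) \<le> B"
  shows "second_moment M X $ i $ j = expectation (\<lambda>\<omega>. X \<omega> $ i * X \<omega> $ j)"
  unfolding second_moment_def
  using integral_bounded_linear[OF bounded_linear_compose[OF bounded_linear_vec_nth
      bounded_linear_vec_nth] integrable_outer_product[OF assms]]
  by simp

lemma inner_mult_inner_eq_sum:
  fixes x a b :: "real^'p"
  shows "(x \<bullet> a) * (x \<bullet> b) = (\<Sum>(i, j)\<in>UNIV. (a $ i * b $ j) * (x $ i * x $ j))"
  by (simp add: inner_vec_def sum_product sum.cartesian_product ac_simps)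

lemma inner_matrix_vector_eq_sum:
  fixes S :: "real^'p^'p" and a b :: "real^'p"
  shows "a \<bullet> (S *v b) = (\<Sum>(i, j)\<in>UNIV. (a $ i * b $ j) * S $ i $ j)"
  by (simp add: inner_vec_def matrix_vector_mult_def sum_distrib_left sum.cartesian_product
      ac_simps)

lemma (in prob_space) integrable_nth_mult_nth:
  fixes X :: "'a \<Rightarrow> real^'p"
  assumes "X \<in> borel_measurable M" and "AE \<omega> in M. norm (X \<omega>) \<le> B"
  shows "integrable M (\<lambda>\<omega>. X \<omega> $ i * X \<omega> $ j)"
  using integrable_bounded_linear[OF bounded_linear_compose[OF bounded_linear_vec_nth
      bounded_linear_vec_nth] integrable_outer_product[OF assms], of i j]
  by simp

lemma (in prob_space) expectation_inner_mult_inner: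
  fixes X :: "'a \<Rightarrow> real^'p"
  assumes X: "X \<in> borel_measurable M" "AE \<omega> in M. norm (X \<omega>) \<le> B"
  shows "expectation (\<lambda>\<omega>. (X \<omega> \<bullet> a) * (X \<omega> \<bullet> b)) = a \<bullet> (second_moment M X *v b)"
proof -
  have "integrable M (\<lambda>\<omega>. X \<omega> $ i * X \<omega> $ j)" for i j
    by (rule integrable_nth_mult_nth[OF X])
  then show ?thesis
    unfolding inner_mult_inner_eq_sum inner_matrix_vector_eq_sum second_moment_nth[OF X]
    by (simp add: split_beta)
qed

lemma (in prob_space) abs_inner_second_moment_le:
  fixes X :: "'a \<Rightarrow> real^'p"
  assumes X: "X \<in> borel_measurable M" "AE \<omega> in M. norm (X \<omega>) \<le> B"
  shows "\<bar>a \<bullet> (second_moment M X *v b)\<bar> \<le> B\<^sup>2 * (norm a * norm b)"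
proof -
  define f where "f \<omega> = (X \<omega> \<bullet> a) * (X \<omega> \<bullet> b)" for \<omega>
  have bound: "AE \<omega> in M. \<bar>f \<omega>\<bar> \<le> B\<^sup>2 * (norm a * norm b)"
    using X(2)
  proof eventually_elim
    case (elim \<omega>)
    then have "(norm (X \<omega>))\<^sup>2 \<le> B\<^sup>2" by (simp add: power_mono)
    then show ?case
      using abs_inner_mult_inner_le[of "X \<omega>" a b] unfolding f_def
      by (elim order_trans) (simp add: mult_right_mono)
  qed
  have "integrable M f"
    using bound X(1) unfolding f_def by (intro integrable_const_bound) auto
  then have "expectation f \<le> B\<^sup>2 * (norm a * norm b)"
    and "- (B\<^sup>2 * (norm a * norm b)) \<le> expectation f"
    using bound by (auto intro!: integral_le_const integral_ge_const elim!: eventually_mono)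
  then have "\<bar>expectation f\<bar> \<le> B\<^sup>2 * (norm a * norm b)" by linarith
  then show ?thesis unfolding f_def expectation_inner_mult_inner[OF X] .
qed

lemma abs_nth_mult_nth_le: "\<bar>x $ i * y $ j\<bar> \<le> norm x * norm y" for x y :: "real^'p"
  unfolding abs_mult by (intro mult_mono component_le_norm_cart) auto

lemma integrable_bounded_mult:
  fixes f g :: "'a \<Rightarrow> real"
  assumes "integrable M g" "f \<in> borel_measurable M" "\<And>\<omega>. \<omega> \<in> space M \<Longrightarrow> \<bar>f \<omega>\<bar> \<le> K"
  shows "integrable M (\<lambda>\<omega>. f \<omega> * g \<omega>)"
proof (rule Bochner_Integration.integrable_bound)
  show "integrable M (\<lambda>\<omega>. K * g \<omega>)" using assms(1) by simp
  show "(\<lambda>\<omega>. f \<omega> * g \<omega>) \<in> borel_measurable M" using assms(1,2) by measurable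
  show "AE \<omega> in M. norm (f \<omega> * g \<omega>) \<le> norm (K * g \<omega>)"
  proof (rule AE_I2)
    fix \<omega> assume "\<omega> \<in> space M"
    then have "\<bar>f \<omega>\<bar> \<le> \<bar>K\<bar>" using assms(3) by fastforce
    then show "norm (f \<omega> * g \<omega>) \<le> norm (K * g \<omega>)" by (simp add: abs_mult mult_right_mono)
  qed
qed

lemma (in prob_space) real_cond_exp_inner_mult_inner:
  fixes X a b :: "'a \<Rightarrow> real^'p"
  assumes F: "subalgebra M F"
    and X: "X \<in> borel_measurable M" "AE \<omega> in M. norm (X \<omega>) \<le> B"
    and indep: "indep_set (sets F) (sigma_sets (space M) {X -` A \<inter> space M | A. A \<in> sets borel})"
    and ab: "a \<in> borel_measurable F" "b \<in> borel_measurable F"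
    and bounded: "\<And>\<omega>. \<omega> \<in> space M \<Longrightarrow> norm (a \<omega>) * norm (b \<omega>) \<le> K"
  shows "AE \<omega> in M. real_cond_exp M F (\<lambda>\<omega>. (X \<omega> \<bullet> a \<omega>) * (X \<omega> \<bullet> b \<omega>)) \<omega>
    = a \<omega> \<bullet> (second_moment M X *v b \<omega>)"
proof -
  interpret sigma_finite_subalgebra M F
    using F by (intro finite_measure_subalgebra_is_sigma_finite) unfold_locales
  define c where "c ij \<omega> = a \<omega> $ fst ij * b \<omega> $ snd ij" for ij \<omega>
  define g where "g ij \<omega> = X \<omega> $ fst ij * X \<omega> $ snd ij" for ij \<omega>
  have [measurable]: "X \<in> borel_measurable M" using X(1) .
  have c_meas: "c ij \<in> borel_measurable F" for ij unfolding c_def using ab by measurable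
  have g_meas: "g ij \<in> borel_measurable M" for ij unfolding g_def by measurable
  have int: "integrable M (\<lambda>\<omega>. c ij \<omega> * g ij \<omega>)" for ij
  proof (rule integrable_bounded_mult)
    show "integrable M (g ij)" unfolding g_def by (rule integrable_nth_mult_nth[OF X])
    show "\<bar>c ij \<omega>\<bar> \<le> K" if "\<omega> \<in> space M" for \<omega>
      using abs_nth_mult_nth_le[of "a \<omega>"] bounded[OF that] unfolding c_def by (rule order_trans)
  qed (rule measurable_from_subalg[OF F c_meas])
  have cond_g: "AE \<omega> in M. real_cond_exp M F (g ij) \<omega> = second_moment M X $ fst ij $ snd ij" for ij
    using real_cond_exp_indep[OF F X(1) indep _ integrable_nth_mult_nth[OF X]]
    unfolding g_def second_moment_nth[OF X] by simp
  have "AE \<omega> in M. real_cond_exp M F (\<lambda>\<omega>. c ij \<omega> * g ij \<omega>) \<omega>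
      = c ij \<omega> * second_moment M X $ fst ij $ snd ij" for ij
    using real_cond_exp_mult[OF c_meas[of ij] g_meas[of ij] int[of ij]] cond_g[of ij]
    by eventually_elim simp
  then have each: "AE \<omega> in M. \<forall>ij\<in>UNIV. real_cond_exp M F (\<lambda>\<omega>. c ij \<omega> * g ij \<omega>) \<omega>
      = c ij \<omega> * second_moment M X $ fst ij $ snd ij"
    by (intro AE_finite_allI) simp_all
  have sum: "AE \<omega> in M. real_cond_exp M F (\<lambda>\<omega>. \<Sum>ij\<in>UNIV. c ij \<omega> * g ij \<omega>) \<omega>
      = (\<Sum>ij\<in>UNIV. real_cond_exp M F (\<lambda>\<omega>. c ij \<omega> * g ij \<omega>) \<omega>)"
    using int by (rule real_cond_exp_sum)
  have expand: "(\<lambda>\<omega>. (X \<omega> \<bullet> a \<omega>) * (X \<omega> \<bullet> b \<omega>)) = (\<lambda>\<omega>. \<Sum>ij\<in>UNIV. c ij \<omega> * g ij \<omega>)"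
    by (simp add: inner_mult_inner_eq_sum c_def g_def split_beta)
  show ?thesis
    unfolding expand using each sum
  proof eventually_elim
    case (elim \<omega>)
    have "real_cond_exp M F (\<lambda>\<omega>. \<Sum>ij\<in>UNIV. c ij \<omega> * g ij \<omega>) \<omega>
        = (\<Sum>ij\<in>UNIV. c ij \<omega> * second_moment M X $ fst ij $ snd ij)"
      unfolding elim(2) using elim(1) by (intro sum.cong) auto
    then show ?case by (simp add: inner_matrix_vector_eq_sum c_def split_beta)
  qed
qed

lemma (in prob_space) real_cond_exp_centered:
  assumes G: "subalgebra M G" and F: "subalgebra G F"
    and D: "integrable M D" "D \<in> borel_measurable G"
  shows "(\<lambda>\<omega>. D \<omega> - real_cond_exp M F D \<omega>) \<in> borel_measurable G"
    and "integrable M (\<lambda>\<omega>. D \<omega> - real_cond_exp M F D \<omega>)"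
    and "AE \<omega> in M. real_cond_exp M F (\<lambda>\<omega>. D \<omega> - real_cond_exp M F D \<omega>) \<omega> = 0"
proof -
  have "subalgebra M F" using G F by (auto simp: subalgebra_def)
  then interpret sigma_finite_subalgebra M F
    by (intro finite_measure_subalgebra_is_sigma_finite) unfold_locales
  have "real_cond_exp M F D \<in> borel_measurable G"
    using F by (rule measurable_from_subalg) simp
  with D(2) show "(\<lambda>\<omega>. D \<omega> - real_cond_exp M F D \<omega>) \<in> borel_measurable G"
    by measurable
  show "integrable M (\<lambda>\<omega>. D \<omega> - real_cond_exp M F D \<omega>)"
    using D(1) by (intro Bochner_Integration.integrable_diff real_cond_exp_int(1))
  have int: "integrable M (real_cond_exp M F D)" using D(1) by (rule real_cond_exp_int(1))
  have "AE \<omega> in M. real_cond_exp M F (\<lambda>\<omega>. D \<omega> - real_cond_exp M F D \<omega>) \<omega>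
      = real_cond_exp M F D \<omega> - real_cond_exp M F (real_cond_exp M F D) \<omega>"
    using D(1) int by (rule real_cond_exp_diff)
  moreover have "AE \<omega> in M. real_cond_exp M F (real_cond_exp M F D) \<omega> = real_cond_exp M F D \<omega>"
    using int by (rule real_cond_exp_F_meas) simp
  ultimately show "AE \<omega> in M. real_cond_exp M F (\<lambda>\<omega>. D \<omega> - real_cond_exp M F D \<omega>) \<omega> = 0"
    by eventually_elim simp
qed

lemma borel_measurable_kras_step [measurable]:
  fixes f g :: "'a \<Rightarrow> real^'p"
  assumes [measurable]: "f \<in> borel_measurable N" "g \<in> borel_measurable N"
  shows "(\<lambda>\<omega>. kras_step \<eta> (f \<omega>) (g \<omega>)) \<in> borel_measurable N"
  unfolding kras_step_def Let_def by measurable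

lemma borel_measurable_oja_step [measurable]:
  fixes f g :: "'a \<Rightarrow> real^'p"
  assumes [measurable]: "f \<in> borel_measurable N" "g \<in> borel_measurable N"
  shows "(\<lambda>\<omega>. oja_step \<eta> (f \<omega>) (g \<omega>)) \<in> borel_measurable N"
  unfolding oja_step_def Let_def by measurable

lemma borel_measurable_sin2_grad [measurable]:
  fixes f :: "'a \<Rightarrow> real^'p"
  assumes [measurable]: "f \<in> borel_measurable N"
  shows "(\<lambda>\<omega>. sin2_grad w (f \<omega>)) \<in> borel_measurable N"
  unfolding sin2_grad_def rejection_def by measurable

lemma borel_measurable_sin2_first_order [measurable]:
  fixes f g :: "'a \<Rightarrow> real^'p"
  assumes [measurable]: "f \<in> borel_measurable N" "g \<in> borel_measurable N"
  shows "(\<lambda>\<omega>. sin2_first_order w \<eta> (f \<omega>) (g \<omega>)) \<in> borel_measurable N"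
  unfolding sin2_first_order_def by measurable

section \<open>The streaming PCA setting\<close>

locale streaming_pca = prob_space M
  for M :: "'a measure"
    and X :: "nat \<Rightarrow> 'a \<Rightarrow> real^'p" and v0 :: "'a \<Rightarrow> real^'p" and eta :: "nat \<Rightarrow> real"
    and B :: real and Sigma :: "real^'p^'p" and lam :: "nat \<Rightarrow> real" and v1 :: "real^'p"
    and rho :: real +
  assumes indep: "indep_vars (\<lambda>_. borel) (\<lambda>t. if t = 0 then v0 else X t) UNIV"
    and ident: "\<And>t. 1 \<le> t \<Longrightarrow> distr M borel (X t) = distr M borel (X 1)"
    and bounded: "\<And>t. 1 \<le> t \<Longrightarrow> AE \<omega> in M. norm (X t \<omega>) \<le> B"
    and cov: "Sigma = second_moment M (X 1)"
    and eigs: "ordered_eigenvalues Sigma lam" and gap: "lam 1 < lam 0"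
    and v1_unit: "norm v1 = 1" and v1_eigen: "Sigma *v v1 = lam 0 *\<^sub>R v1"
    and rho_def: "rho = lam 0 - lam 1"
    and v0_unit: "\<And>\<omega>. \<omega> \<in> space M \<Longrightarrow> norm (v0 \<omega>) = 1"
    and eta_pos: "\<And>t. 1 \<le> t \<Longrightarrow> 0 < eta t"
begin

abbreviation \<F> :: "nat \<Rightarrow> 'a measure" where
  "\<F> t \<equiv> nat_filtration M (\<lambda>i. if i = 0 then v0 else X i) t"

lemma measurable_sample: "(if i = 0 then v0 else X i) \<in> borel_measurable M"
  using indep unfolding indep_vars_def2 by auto

lemma measurable_X [measurable]: "1 \<le> t \<Longrightarrow> X t \<in> borel_measurable M"
  using measurable_sample[of t] by simp

lemma subalgebra_filtration: "subalgebra M (\<F> t)"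
  using measurable_sample by (rule subalgebra_nat_filtration)

lemma subalgebra_filtration_mono: "s \<le> t \<Longrightarrow> subalgebra (\<F> t) (\<F> s)"
  by (rule subalgebra_nat_filtration_mono)

lemma measurable_X_filtration: "1 \<le> t \<Longrightarrow> X t \<in> borel_measurable (\<F> t)"
  using measurable_nat_filtration[of t t "\<lambda>i. if i = 0 then v0 else X i"] by simp

lemma measurable_v0_filtration: "v0 \<in> borel_measurable (\<F> 0)"
  using measurable_nat_filtration[of 0 0 "\<lambda>i. if i = 0 then v0 else X i"] by simp

lemma indep_X_filtration:
  assumes "1 \<le> t"
  shows "indep_set (sets (\<F> (t - 1))) (sigma_sets (space M) {X t -` A \<inter> space M | A. A \<in> sets borel})"
  using indep_set_nat_filtration[OF indep, of "t - 1" t] assms by simp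

lemma second_moment_X:
  assumes "1 \<le> t"
  shows "second_moment M (X t) = Sigma"
proof -
  have [measurable]: "(\<lambda>x::real^'p. \<chi> i j. x $ i * x $ j) \<in> borel_measurable borel"
    by (rule borel_measurable_outer_product[OF measurable_ident_sets]) simp
  have "second_moment M (X t) = (\<integral>x. (\<chi> i j. x $ i * x $ j) \<partial>distr M borel (X t))"
    unfolding second_moment_def using assms by (intro integral_distr[symmetric]) simp_all
  also have "\<dots> = (\<integral>x. (\<chi> i j. x $ i * x $ j) \<partial>distr M borel (X 1))"
    using ident[OF assms] by simp
  also have "\<dots> = second_moment M (X 1)"
    unfolding second_moment_def by (intro integral_distr) simp_all
  finally show ?thesis using cov by simp
qed

lemma abs_sin2_first_order_mean_le:
  assumes "0 \<le> \<eta>"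
  shows "\<bar>sin2_first_order_mean Sigma v1 \<eta> v\<bar> \<le> 2 * \<eta> * B\<^sup>2 * sqrt (sin2 v v1)"
proof -
  have "norm (sgn v) * norm (sin2_grad v1 v) \<le> 1 * (2 * sqrt (sin2 v v1))"
    using norm_sin2_grad_le[OF v1_unit] by (intro mult_mono) (auto simp: norm_sgn)
  then have "\<bar>sgn v \<bullet> (Sigma *v sin2_grad v1 v)\<bar> \<le> B\<^sup>2 * (2 * sqrt (sin2 v v1))"
    using abs_inner_second_moment_le[OF measurable_X bounded, of 1 "sgn v" "sin2_grad v1 v"]
    unfolding cov[symmetric] by (simp add: order_trans[OF _ mult_left_mono])
  then show ?thesis
    using assms by (simp add: sin2_first_order_mean_def abs_mult mult_left_mono ac_simps)
qed

lemma real_cond_exp_sin2_first_order: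
  assumes t: "1 \<le> t" and W: "W \<in> borel_measurable (\<F> (t - 1))"
  shows "AE \<omega> in M. real_cond_exp M (\<F> (t - 1)) (\<lambda>\<omega>. sin2_first_order v1 \<eta> (X t \<omega>) (W \<omega>)) \<omega>
    = sin2_first_order_mean Sigma v1 \<eta> (W \<omega>)"
proof -
  have bound: "norm (\<eta> *\<^sub>R sgn (W \<omega>)) * norm (sin2_grad v1 (W \<omega>)) \<le> \<bar>\<eta>\<bar> * 2" for \<omega>
  proof -
    have "sqrt (sin2 (W \<omega>) v1) \<le> 1" using sin2_le_one by simp
    then have "norm (sin2_grad v1 (W \<omega>)) \<le> 2"
      using norm_sin2_grad_le[OF v1_unit, of "W \<omega>"] by linarith
    then show ?thesis by (intro mult_mono) (auto simp: norm_sgn)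
  qed
  have "(\<lambda>\<omega>. sin2_first_order v1 \<eta> (X t \<omega>) (W \<omega>))
      = (\<lambda>\<omega>. (X t \<omega> \<bullet> \<eta> *\<^sub>R sgn (W \<omega>)) * (X t \<omega> \<bullet> sin2_grad v1 (W \<omega>)))"
    by (simp add: sin2_first_order_def mult.assoc)
  then show ?thesis
    using real_cond_exp_inner_mult_inner[OF subalgebra_filtration measurable_X[OF t] bounded[OF t]
        indep_X_filtration[OF t] _ _ bound] W
    by (simp add: sin2_first_order_mean_def second_moment_X[OF t])
qed

definition sin2_recursion :: "(nat \<Rightarrow> 'a \<Rightarrow> real^'p) \<Rightarrow> (nat \<Rightarrow> real) \<Rightarrow> nat \<Rightarrow> bool" where
  "sin2_recursion V R t \<longleftrightarrow> (\<exists>Q :: 'a \<Rightarrow> real.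
     Q \<in> borel_measurable (\<F> t) \<and> integrable M Q \<and>
     (AE \<omega> in M. real_cond_exp M (\<F> (t - 1)) Q \<omega> = 0) \<and>
     (AE \<omega> in M. \<bar>Q \<omega>\<bar> \<le> 8 * B\<^sup>2 * eta t * sqrt (sin2 (V (t - 1) \<omega>) v1)) \<and>
     (AE \<omega> in M.
        sin2 (V t \<omega>) v1
          \<le> (1 - 2 * rho * eta t) * sin2 (V (t - 1) \<omega>) v1
            + 2 * rho * eta t * (sin2 (V (t - 1) \<omega>) v1)\<^sup>2 + Q \<omega> + R t))"

lemma abs_sin2_first_order_X_le:
  assumes t: "1 \<le> t"
  shows "AE \<omega> in M. \<bar>sin2_first_order v1 (eta t) (X t \<omega>) (W \<omega>)\<bar>
    \<le> 2 * eta t * B\<^sup>2 * sqrt (sin2 (W \<omega>) v1)"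
  using bounded[OF t]
  by eventually_elim (rule abs_sin2_first_order_le[OF v1_unit _ less_imp_le[OF eta_pos[OF t]]])

lemma integrable_sin2_first_order_X:
  assumes t: "1 \<le> t" and W: "W \<in> borel_measurable M"
  shows "integrable M (\<lambda>\<omega>. sin2_first_order v1 (eta t) (X t \<omega>) (W \<omega>))"
proof (rule integrable_const_bound)
  show "AE \<omega> in M. norm (sin2_first_order v1 (eta t) (X t \<omega>) (W \<omega>)) \<le> 2 * eta t * B\<^sup>2"
    using abs_sin2_first_order_X_le[OF t, of W]
  proof eventually_elim
    case (elim \<omega>)
    have "2 * eta t * B\<^sup>2 * sqrt (sin2 (W \<omega>) v1) \<le> 2 * eta t * B\<^sup>2"
      using eta_pos[OF t] sin2_le_one[of "W \<omega>" v1] by (intro mult_left_le) auto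
    with elim show ?case by simp
  qed
qed (use t W in measurable)

lemma sin2_recursionI:
  assumes t: "1 \<le> t"
    and V_meas: "V (t - 1) \<in> borel_measurable (\<F> (t - 1))"
    and V_nonzero: "\<And>\<omega>. \<omega> \<in> space M \<Longrightarrow> V (t - 1) \<omega> \<noteq> 0"
    and step: "\<And>\<omega>. \<omega> \<in> space M \<Longrightarrow> norm (X t \<omega>) \<le> B \<Longrightarrow>
      sin2 (V t \<omega>) v1
        \<le> sin2 (V (t - 1) \<omega>) v1 + sin2_first_order v1 (eta t) (X t \<omega>) (V (t - 1) \<omega>) + R t"
  shows "sin2_recursion V R t"
proof -
  define W L where "W = V (t - 1)" and "L \<omega> = sin2 (W \<omega>) v1" for \<omega>
  define D where "D \<omega> = sin2_first_order v1 (eta t) (X t \<omega>) (W \<omega>)" for \<omega>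
  define Q where "Q \<omega> = D \<omega> - real_cond_exp M (\<F> (t - 1)) D \<omega>" for \<omega>
  have \<eta>: "0 \<le> eta t" using eta_pos[OF t] by simp
  have past: "subalgebra (\<F> t) (\<F> (t - 1))" by (rule subalgebra_filtration_mono) simp
  have [measurable]: "W \<in> borel_measurable (\<F> t)" "X t \<in> borel_measurable (\<F> t)"
    using measurable_from_subalg[OF past V_meas] measurable_X_filtration[OF t]
    by (simp_all add: W_def)
  have D_meas: "D \<in> borel_measurable (\<F> t)" unfolding D_def by measurable
  have "integrable M D"
    unfolding D_def W_def
    using measurable_from_subalg[OF subalgebra_filtration V_meas]
    by (rule integrable_sin2_first_order_X[OF t])
  note Q_props = real_cond_exp_centered[OF subalgebra_filtration past this D_meas, folded Q_def]
  have mean: "AE \<omega> in M.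
      real_cond_exp M (\<F> (t - 1)) D \<omega> = sin2_first_order_mean Sigma v1 (eta t) (W \<omega>)"
    unfolding D_def W_def by (rule real_cond_exp_sin2_first_order[OF t V_meas])
  have "AE \<omega> in M. \<bar>Q \<omega>\<bar> \<le> 8 * B\<^sup>2 * eta t * sqrt (L \<omega>)"
    using abs_sin2_first_order_X_le[OF t, of W] mean
  proof eventually_elim
    case (elim \<omega>)
    have "\<bar>Q \<omega>\<bar> \<le> \<bar>D \<omega>\<bar> + \<bar>sin2_first_order_mean Sigma v1 (eta t) (W \<omega>)\<bar>"
      unfolding Q_def elim(2) by (rule abs_triangle_ineq4)
    also have "\<dots> \<le> 2 * eta t * B\<^sup>2 * sqrt (L \<omega>) + 2 * eta t * B\<^sup>2 * sqrt (L \<omega>)"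
      using elim(1) abs_sin2_first_order_mean_le[OF \<eta>, of "W \<omega>"]
      unfolding D_def L_def by linarith
    finally show ?case using \<eta> by (simp add: algebra_simps)
  qed
  moreover have "AE \<omega> in M. sin2 (V t \<omega>) v1
      \<le> (1 - 2 * rho * eta t) * L \<omega> + 2 * rho * eta t * (L \<omega>)\<^sup>2 + Q \<omega> + R t"
    using AE_space bounded[OF t] mean
  proof eventually_elim
    case (elim \<omega>)
    have "sin2 (V t \<omega>) v1 \<le> L \<omega> + Q \<omega> + sin2_first_order_mean Sigma v1 (eta t) (W \<omega>) + R t"
      using step[OF elim(1,2)] elim(3) by (simp add: Q_def D_def L_def W_def)
    then show ?case
      using sin2_first_order_mean_le[OF eigs gap v1_unit v1_eigen V_nonzero[OF elim(1)] \<eta>]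
      by (simp add: rho_def W_def L_def power2_eq_square algebra_simps)
  qed
  ultimately show ?thesis
    unfolding sin2_recursion_def using Q_props by (auto simp: L_def W_def)
qed

lemma measurable_iterate_filtration:
  assumes V0: "V 0 = v0"
    and V_Suc: "\<And>t. V (Suc t) = (\<lambda>\<omega>. step (eta (Suc t)) (X (Suc t) \<omega>) (V t \<omega>))"
    and step_meas: "\<And>(N :: 'a measure) e f g. f \<in> borel_measurable N \<Longrightarrow> g \<in> borel_measurable N \<Longrightarrow>
      (\<lambda>\<omega>. step e (f \<omega>) (g \<omega>)) \<in> borel_measurable N"
  shows "V t \<in> borel_measurable (\<F> t)"
proof (induction t)
  case 0
  show ?case using measurable_v0_filtration by (simp add: V0)
next
  case (Suc t)
  have "X (Suc t) \<in> borel_measurable (\<F> (Suc t))" by (rule measurable_X_filtration) simp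
  moreover have "V t \<in> borel_measurable (\<F> (Suc t))"
    using measurable_from_subalg[OF subalgebra_filtration_mono Suc.IH] by simp
  ultimately show ?case unfolding V_Suc by (rule step_meas)
qed

lemma kras_iter_nonzero: "\<omega> \<in> space M \<Longrightarrow> kras_iter eta X v0 t \<omega> \<noteq> 0"
  by (induction t) (auto simp: kras_step_nonzero dest: v0_unit)

lemma oja_iter_nonzero: "\<omega> \<in> space M \<Longrightarrow> oja_iter eta X v0 t \<omega> \<noteq> 0"
  by (induction t) (auto simp: oja_step_nonzero less_imp_le[OF eta_pos] dest: v0_unit)

lemma measurable_kras_iter: "kras_iter eta X v0 t \<in> borel_measurable (\<F> t)"
  by (rule measurable_iterate_filtration[where step = kras_step, OF _ _ borel_measurable_kras_step])
    (simp_all add: fun_eq_iff)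

lemma measurable_oja_iter: "oja_iter eta X v0 t \<in> borel_measurable (\<F> t)"
  by (rule measurable_iterate_filtration[where step = oja_step, OF _ _ borel_measurable_oja_step])
    (simp_all add: fun_eq_iff)

lemma kras_recursion:
  assumes t: "1 \<le> t"
  shows "sin2_recursion (kras_iter eta X v0) (\<lambda>t. 4 * B ^ 4 * (eta t)\<^sup>2) t"
proof (rule sin2_recursionI[OF t])
  show "kras_iter eta X v0 (t - 1) \<in> borel_measurable (\<F> (t - 1))" by (rule measurable_kras_iter)
  obtain s where t_eq: "t = Suc s" using t by (cases t) auto
  fix \<omega> assume \<omega>: "\<omega> \<in> space M" and "norm (X t \<omega>) \<le> B"
  then have "sin2 (kras_iter eta X v0 t \<omega>) v1
      \<le> sin2 (kras_iter eta X v0 (t - 1) \<omega>) v1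
        + sin2_first_order v1 (eta t) (X t \<omega>) (kras_iter eta X v0 (t - 1) \<omega>) + (eta t)\<^sup>2 * B ^ 4"
    unfolding t_eq using sin2_kras_step_le[OF kras_iter_nonzero[OF \<omega>] v1_unit] by simp
  then show "sin2 (kras_iter eta X v0 t \<omega>) v1
      \<le> sin2 (kras_iter eta X v0 (t - 1) \<omega>) v1
        + sin2_first_order v1 (eta t) (X t \<omega>) (kras_iter eta X v0 (t - 1) \<omega>) + 4 * B ^ 4 * (eta t)\<^sup>2"
  proof (rule order_trans[OF _ add_left_mono])
    have "(eta t)\<^sup>2 * B ^ 4 \<le> 4 * ((eta t)\<^sup>2 * B ^ 4)" by simp
    then show "(eta t)\<^sup>2 * B ^ 4 \<le> 4 * B ^ 4 * (eta t)\<^sup>2" by (simp add: ac_simps)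
  qed
qed (rule kras_iter_nonzero)

lemma oja_recursion:
  assumes t: "1 \<le> t"
  shows "sin2_recursion (oja_iter eta X v0) (\<lambda>t. (5 * B ^ 4 + 2 * eta t * B ^ 6) * (eta t)\<^sup>2) t"
proof (rule sin2_recursionI[OF t])
  show "oja_iter eta X v0 (t - 1) \<in> borel_measurable (\<F> (t - 1))" by (rule measurable_oja_iter)
  obtain s where t_eq: "t = Suc s" using t by (cases t) auto
  fix \<omega> assume \<omega>: "\<omega> \<in> space M" and "norm (X t \<omega>) \<le> B"
  then show "sin2 (oja_iter eta X v0 t \<omega>) v1
      \<le> sin2 (oja_iter eta X v0 (t - 1) \<omega>) v1
        + sin2_first_order v1 (eta t) (X t \<omega>) (oja_iter eta X v0 (t - 1) \<omega>)
        + (5 * B ^ 4 + 2 * eta t * B ^ 6) * (eta t)\<^sup>2"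
    unfolding t_eq
    using sin2_oja_step_le[OF oja_iter_nonzero[OF \<omega>] v1_unit _ less_imp_le[OF eta_pos]] by simp
qed (rule oja_iter_nonzero)

end

theorem proposition4:
  fixes M :: "'a measure"
    and X :: "nat \<Rightarrow> 'a \<Rightarrow> real^'p"
    and v0 :: "'a \<Rightarrow> real^'p"
    and eta :: "nat \<Rightarrow> real"
    and B :: real
    and Sigma :: "real^'p^'p"
    and lam :: "nat \<Rightarrow> real"
    and v1 :: "real^'p"
    and rho :: real
  assumes prob: "prob_space M"
    and dim: "CARD('p) \<ge> 2"
    and indep: "prob_space.indep_vars M (\<lambda>_. borel) (\<lambda>t. if t = 0 then v0 else X t) UNIV"
    and ident: "\<forall>t\<ge>1. distr M borel (X t) = distr M borel (X 1)"
    and centered: "\<forall>t\<ge>1. prob_space.expectation M (X t) = 0"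
    and bounded: "\<forall>t\<ge>1. AE \<omega> in M. norm (X t \<omega>) \<le> B"
    and cov: "Sigma = prob_space.expectation M (\<lambda>\<omega>. \<chi> i j. X 1 \<omega> $ i * X 1 \<omega> $ j)"
    and eigs: "ordered_eigenvalues Sigma lam"
    and gap: "lam 0 > lam 1"
    and v1: "norm v1 = 1" "Sigma *v v1 = lam 0 *\<^sub>R v1"
    and rho: "rho = lam 0 - lam 1"
    and v0_unit: "\<forall>\<omega>\<in>space M. norm (v0 \<omega>) = 1"
    and eta_pos: "\<forall>t\<ge>1. eta t > 0"
  shows
    "(\<forall>t\<ge>1. \<exists>Q :: 'a \<Rightarrow> real.
        Q \<in> borel_measurable (nat_filtration M (\<lambda>i. if i = 0 then v0 else X i) t) \<and>
        integrable M Q \<and>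
        (AE \<omega> in M. real_cond_exp M (nat_filtration M (\<lambda>i. if i = 0 then v0 else X i) (t - 1)) Q \<omega> = 0) \<and>
        (AE \<omega> in M. \<bar>Q \<omega>\<bar> \<le> 8 * B\<^sup>2 * eta t * sqrt (sin2 (kras_iter eta X v0 (t - 1) \<omega>) v1)) \<and>
        (AE \<omega> in M.
           sin2 (kras_iter eta X v0 t \<omega>) v1
             \<le> (1 - 2 * rho * eta t) * sin2 (kras_iter eta X v0 (t - 1) \<omega>) v1
               + 2 * rho * eta t * (sin2 (kras_iter eta X v0 (t - 1) \<omega>) v1)\<^sup>2
               + Q \<omega> + 4 * B ^ 4 * (eta t)\<^sup>2))
   \<and>
    (\<forall>t\<ge>1. \<exists>Q :: 'a \<Rightarrow> real.
        Q \<in> borel_measurable (nat_filtration M (\<lambda>i. if i = 0 then v0 else X i) t) \<and>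
        integrable M Q \<and>
        (AE \<omega> in M. real_cond_exp M (nat_filtration M (\<lambda>i. if i = 0 then v0 else X i) (t - 1)) Q \<omega> = 0) \<and>
        (AE \<omega> in M. \<bar>Q \<omega>\<bar> \<le> 8 * B\<^sup>2 * eta t * sqrt (sin2 (oja_iter eta X v0 (t - 1) \<omega>) v1)) \<and>
        (AE \<omega> in M.
           sin2 (oja_iter eta X v0 t \<omega>) v1
             \<le> (1 - 2 * rho * eta t) * sin2 (oja_iter eta X v0 (t - 1) \<omega>) v1
               + 2 * rho * eta t * (sin2 (oja_iter eta X v0 (t - 1) \<omega>) v1)\<^sup>2
               + Q \<omega> + (5 * B ^ 4 + 2 * eta t * B ^ 6) * (eta t)\<^sup>2))"
proof -
  interpret streaming_pca M X v0 eta B Sigma lam v1 rho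
  proof (rule streaming_pca.intro[OF prob streaming_pca_axioms.intro])
    show "Sigma = second_moment M (X 1)" by (simp add: cov second_moment_def)
    show "distr M borel (X t) = distr M borel (X 1)" if "1 \<le> t" for t
      using ident that by blast
  qed (use indep bounded eigs gap v1 rho v0_unit eta_pos in simp_all)
  show ?thesis
    using kras_recursion oja_recursion unfolding sin2_recursion_def by blast
qed

end
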